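(* Fix $\delta>0$. If $p=p(n)=\omega(n^{-1})$ and $G\sim G(n,p)$, then asymptotically almost surely, for every two disjoint vertex sets $X,Y\subseteq[n]$ with $|X|,|Y|\ge\delta n$, $G$ contains a matching of at least $\delta n/2$ edges each joining a vertex of $X$ to a vertex of $Y$.
   Context: $G(n,p)$ is the Erdős–Rényi random graph on $[n]$ with each edge present independently with probability $p$. "Asymptotically almost surely" means with probability tending to $1$ as $n\to\infty$. *)

theory Defs
  imports "HOL-Probability.Probability"
begin

definition all_edges :: "nat \<Rightarrow> nat set set" where
  "all_edges n = {e. e \<subseteq> {1..n} \<and> card e = 2}"

definition gnp :: "nat \<Rightarrow> real \<Rightarrow> nat set set pmf" where
  "gnp n p = map_pmf (\<lambda>f. {e \<in> all_edges n. f e})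
                     (Pi_pmf (all_edges n) False (\<lambda>_. bernoulli_pmf p))"

definition XY_matching :: "nat set set \<Rightarrow> nat set \<Rightarrow> nat set \<Rightarrow> nat set set \<Rightarrow> bool" where
  "XY_matching E X Y M \<longleftrightarrow>
     M \<subseteq> E \<and>
     (\<forall>e\<in>M. \<exists>x\<in>X. \<exists>y\<in>Y. e = {x, y}) \<and>
     (\<forall>e\<in>M. \<forall>e'\<in>M. e \<noteq> e' \<longrightarrow> e \<inter> e' = {})"

end

theory Submission
  imports Defs
begin

text \<open>Say that E joins k-sets if every two disjoint k-subsets of [n] are joined by an edge
  of E. Such an E contains large matchings between any two large disjoint sets X and Y: a
  matching built greedily can be extended as long as k unmatched vertices remain on each side,
  i.e. until it has min(|X|, |Y|) - k + 1 edges, which for k = \<lceil>\<delta>n/2\<rceil> is at least \<delta>n/2.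
  A fixed pair of disjoint k-sets spans no edge of G(n,p) with probability
  (1 - p)^(k^2) \<le> exp(-p\<delta>^2n^2/4), and there are at most 4^n such pairs, so by the union
  bound G(n,p) fails to join k-sets with probability at most exp(-n) once pn\<delta>^2 \<ge> 4(ln 4 + 1).\<close>

definition joins_k_sets :: "nat \<Rightarrow> nat \<Rightarrow> nat set set \<Rightarrow> bool" where
  "joins_k_sets n k E \<longleftrightarrow> (\<forall>A B. A \<subseteq> {1..n} \<and> B \<subseteq> {1..n} \<and> A \<inter> B = {} \<and> card A = k \<and> card B = k
      \<longrightarrow> (\<exists>a\<in>A. \<exists>b\<in>B. {a, b} \<in> E))"

definition has_large_XY_matchings :: "real \<Rightarrow> nat \<Rightarrow> nat set set \<Rightarrow> bool" where
  "has_large_XY_matchings \<delta> n E \<longleftrightarrow> (\<forall>X Y. X \<subseteq> {1..n} \<and> Y \<subseteq> {1..n} \<and> X \<inter> Y = {} \<and>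
      real (card X) \<ge> \<delta> * real n \<and> real (card Y) \<ge> \<delta> * real n \<longrightarrow>
      (\<exists>M. XY_matching E X Y M \<and> real (card M) \<ge> \<delta> * real n / 2))"

lemma XY_matching_empty: "XY_matching E X Y {}"
  by (simp add: XY_matching_def)

lemma XY_matching_sym: "XY_matching E X Y M \<Longrightarrow> XY_matching E Y X M"
  unfolding XY_matching_def by (metis insert_commute)

lemma XY_matching_insert:
  assumes M: "XY_matching E X Y M" and "a \<in> X - \<Union>M" "b \<in> Y - \<Union>M" "{a, b} \<in> E"
  shows "XY_matching E X Y (insert {a, b} M)"
  unfolding XY_matching_def
proof (intro conjI ballI impI)
  show "insert {a, b} M \<subseteq> E"
    using M assms(4) unfolding XY_matching_def by blast
  show "\<exists>x\<in>X. \<exists>y\<in>Y. e = {x, y}" if "e \<in> insert {a, b} M" for e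
    using M assms(2,3) that unfolding XY_matching_def by blast
  show "e \<inter> e' = {}" if "e \<in> insert {a, b} M" "e' \<in> insert {a, b} M" "e \<noteq> e'" for e e'
  proof -
    have disj: "{a, b} \<inter> e'' = {}" "e'' \<inter> {a, b} = {}" if "e'' \<in> M" for e''
      using assms(2,3) that by blast+
    from that consider "e = {a, b}" "e' \<in> M" | "e' = {a, b}" "e \<in> M" | "e \<in> M" "e' \<in> M"
      by (metis insert_iff)
    then show ?thesis
      using disj M \<open>e \<noteq> e'\<close> unfolding XY_matching_def by cases simp_all
  qed
qed

lemma finite_XY_matching:
  assumes "XY_matching E X Y M" "finite X" "finite Y"
  shows "finite M"
proof -
  have "M \<subseteq> Pow (X \<union> Y)"
    using assms(1) unfolding XY_matching_def by auto
  then show ?thesis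
    using assms(2,3) by (meson finite_Pow_iff finite_UnI finite_subset)
qed

lemma card_le_card_Diff_Union_XY_matching:
  assumes "XY_matching E X Y M" "X \<inter> Y = {}" "finite X" "finite M"
  shows "card X \<le> card (X - \<Union>M) + card M"
proof -
  have "card (X \<inter> e) \<le> 1" if "e \<in> M" for e
  proof -
    obtain x y where "y \<in> Y" "e = {x, y}"
      using assms(1) \<open>e \<in> M\<close> unfolding XY_matching_def by meson
    then have "X \<inter> e \<subseteq> {x}"
      using assms(2) by auto
    then show ?thesis
      using card_mono[of "{x}"] by fastforce
  qed
  then have "card (X \<inter> \<Union>M) \<le> card M"
    using card_UN_le[OF assms(4), of "\<lambda>e. X \<inter> e"] sum_mono[of M "\<lambda>e. card (X \<inter> e)" "\<lambda>_. 1"]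
    unfolding Int_Union by simp
  moreover have "card X = card (X \<inter> \<Union>M) + card (X - \<Union>M)"
    using assms(3) by (rule card_Int_Diff)
  ultimately show ?thesis
    by linarith
qed

lemma joins_k_setsD:
  "joins_k_sets n k E \<Longrightarrow> A \<subseteq> {1..n} \<Longrightarrow> B \<subseteq> {1..n} \<Longrightarrow> A \<inter> B = {} \<Longrightarrow>
    card A = k \<Longrightarrow> card B = k \<Longrightarrow> \<exists>a\<in>A. \<exists>b\<in>B. {a, b} \<in> E"
  unfolding joins_k_sets_def by (erule allE[of _ A], erule allE[of _ B]) simp

lemma XY_matching_of_joins_k_sets:
  assumes joins: "joins_k_sets n k E"
    and XY: "X \<subseteq> {1..n}" "Y \<subseteq> {1..n}" "X \<inter> Y = {}"
    and "j + k \<le> Suc (card X)" "j + k \<le> Suc (card Y)"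
  shows "\<exists>M. XY_matching E X Y M \<and> card M = j"
  using assms(5,6)
proof (induction j)
  case 0
  show ?case
    by (intro exI[of _ "{}"]) (simp add: XY_matching_empty)
next
  case (Suc j)
  then obtain M where M: "XY_matching E X Y M" "card M = j"
    by auto
  have fin: "finite X" "finite Y"
    using XY(1,2) by (simp_all add: finite_subset)
  then have fin_M: "finite M"
    using finite_XY_matching[OF M(1)] by simp
  have "k \<le> card (X - \<Union>M)"
    using card_le_card_Diff_Union_XY_matching[OF M(1) XY(3) fin(1) fin_M] M(2) Suc.prems by linarith
  then obtain A where A: "A \<subseteq> X - \<Union>M" "card A = k"
    by (meson obtain_subset_with_card_n)
  have "Y \<inter> X = {}"
    using XY(3) by (simp add: Int_commute)
  then have "k \<le> card (Y - \<Union>M)"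
    using card_le_card_Diff_Union_XY_matching[OF XY_matching_sym[OF M(1)] _ fin(2) fin_M] M(2) Suc.prems
    by linarith
  then obtain B where B: "B \<subseteq> Y - \<Union>M" "card B = k"
    by (meson obtain_subset_with_card_n)
  have "A \<subseteq> {1..n}" "B \<subseteq> {1..n}" "A \<inter> B = {}"
    using A(1) B(1) XY by auto
  then obtain a b where ab: "a \<in> A" "b \<in> B" "{a, b} \<in> E"
    using joins_k_setsD[OF joins _ _ _ A(2) B(2)] by blast
  have "a \<in> X - \<Union>M" "b \<in> Y - \<Union>M"
    using A(1) B(1) ab(1,2) by auto
  then have "XY_matching E X Y (insert {a, b} M)" "{a, b} \<notin> M"
    using XY_matching_insert[OF M(1) _ _ ab(3)] by auto
  then show ?case
    using fin_M M(2) by (metis card_insert_disjoint)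
qed

lemma large_XY_matching_of_joins_k_sets:
  assumes "joins_k_sets n (nat \<lceil>c\<rceil>) E" "0 \<le> c"
    and "X \<subseteq> {1..n}" "Y \<subseteq> {1..n}" "X \<inter> Y = {}"
    and "2 * c \<le> real (card X)" "2 * c \<le> real (card Y)"
  shows "\<exists>M. XY_matching E X Y M \<and> c \<le> real (card M)"
proof -
  define k where "k = nat \<lceil>c\<rceil>"
  have k: "c \<le> real k" "real k < c + 1"
    using assms(2) unfolding k_def by linarith+
  then have "k + k \<le> Suc (card X)" "k + k \<le> Suc (card Y)"
    using assms(6,7) by linarith+
  then show ?thesis
    using XY_matching_of_joins_k_sets[OF assms(1)[folded k_def] assms(3-5)] k(1) by fastforce
qed

lemma has_large_XY_matchings_if_joins_k_sets:
  assumes "joins_k_sets n (nat \<lceil>\<delta> * real n / 2\<rceil>) E" "0 \<le> \<delta>"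
  shows "has_large_XY_matchings \<delta> n E"
  unfolding has_large_XY_matchings_def
proof (intro allI impI, elim conjE)
  fix X Y
  assume "X \<subseteq> {1..n}" "Y \<subseteq> {1..n}" "X \<inter> Y = {}"
    "\<delta> * real n \<le> real (card X)" "\<delta> * real n \<le> real (card Y)"
  then show "\<exists>M. XY_matching E X Y M \<and> \<delta> * real n / 2 \<le> real (card M)"
    using large_XY_matching_of_joins_k_sets[OF assms(1)] assms(2) by simp
qed

lemma prob_Pi_pmf_bernoulli_all_False:
  assumes "finite I" "S \<subseteq> I" "0 \<le> q" "q \<le> 1"
  shows "measure_pmf.prob (Pi_pmf I False (\<lambda>_. bernoulli_pmf q)) {f. \<forall>e\<in>S. \<not> f e} = (1 - q) ^ card S"
proof -
  define B where "B = (\<lambda>e. if e \<in> S then {False} else UNIV)"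
  have "{f. \<forall>e\<in>S. \<not> f e} = Pi I B"
    using assms(2) by (auto simp: B_def Pi_def)
  then have "measure_pmf.prob (Pi_pmf I False (\<lambda>_. bernoulli_pmf q)) {f. \<forall>e\<in>S. \<not> f e}
      = (\<Prod>e\<in>I. measure_pmf.prob (bernoulli_pmf q) (B e))"
    using measure_Pi_pmf_Pi[OF assms(1)] by simp
  also have "\<dots> = (\<Prod>e\<in>I. if e \<in> S then 1 - q else 1)"
    by (intro prod.cong) (auto simp: B_def measure_pmf_single assms)
  also have "\<dots> = (1 - q) ^ card S"
    using assms(1,2) by (simp add: prod.If_cases Int_absorb1)
  finally show ?thesis .
qed

lemma card_doubletons_between:
  assumes "finite A" "finite B" "A \<inter> B = {}"
  shows "card {{a, b} | a b. a \<in> A \<and> b \<in> B} = card A * card B"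
proof -
  have "{{a, b} | a b. a \<in> A \<and> b \<in> B} = (\<lambda>(a, b). {a, b}) ` (A \<times> B)"
    by auto
  moreover have "inj_on (\<lambda>(a, b). {a, b}) (A \<times> B)"
    using assms(3) by (auto simp: inj_on_def doubleton_eq_iff)
  ultimately show ?thesis
    by (simp add: card_image card_cartesian_product)
qed

lemma finite_all_edges: "finite (all_edges n)"
  unfolding all_edges_def by (rule finite_subset[of _ "Pow {1..n}"]) auto

lemma prob_gnp_no_edges_between:
  assumes "A \<subseteq> {1..n}" "B \<subseteq> {1..n}" "A \<inter> B = {}" "0 \<le> q" "q \<le> 1"
  shows "measure_pmf.prob (gnp n q) {E. \<forall>a\<in>A. \<forall>b\<in>B. {a, b} \<notin> E} = (1 - q) ^ (card A * card B)"
proof -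
  define S where "S = {{a, b} | a b. a \<in> A \<and> b \<in> B}"
  have edge: "{a, b} \<in> all_edges n" if "a \<in> A" "b \<in> B" for a b
    using assms(1-3) that unfolding all_edges_def by (auto simp: card_insert_if)
  then have S: "S \<subseteq> all_edges n"
    unfolding S_def by blast
  have "(\<lambda>f. {e \<in> all_edges n. f e}) -` {E. \<forall>a\<in>A. \<forall>b\<in>B. {a, b} \<notin> E} = {f. \<forall>e\<in>S. \<not> f e}"
    using edge unfolding S_def by (auto; blast)
  moreover have "card S = card A * card B"
    unfolding S_def using assms(1-3) by (intro card_doubletons_between) (auto intro: finite_subset)
  ultimately show ?thesis
    unfolding gnp_def using prob_Pi_pmf_bernoulli_all_False[OF finite_all_edges S assms(4,5)] by simp
qed

lemma prob_gnp_not_joins_k_sets_le: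
  assumes "0 \<le> q" "q \<le> 1"
  shows "measure_pmf.prob (gnp n q) {E. \<not> joins_k_sets n k E} \<le> 4 ^ n * (1 - q) ^ (k * k)"
proof -
  define P where "P = {(A, B). A \<subseteq> {1..n} \<and> B \<subseteq> {1..n} \<and> A \<inter> B = {} \<and> card A = k \<and> card B = k}"
  define F where "F = (\<lambda>(A :: nat set, B). {E. \<forall>a\<in>A. \<forall>b\<in>B. {a, b} \<notin> E})"
  have P: "P \<subseteq> Pow {1..n} \<times> Pow {1..n}"
    unfolding P_def by blast
  then have "card P \<le> 2 ^ n * 2 ^ n"
    using card_mono[OF _ P] by (simp add: card_cartesian_product card_Pow)
  then have card_P: "real (card P) \<le> 4 ^ n"
    by (metis of_nat_le_iff of_nat_numeral of_nat_power power_mult_distrib num_double numeral_times_numeral)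
  have "{E. \<not> joins_k_sets n k E} = (\<Union>AB\<in>P. F AB)"
    unfolding joins_k_sets_def P_def F_def by auto
  then have "measure_pmf.prob (gnp n q) {E. \<not> joins_k_sets n k E} \<le> (\<Sum>AB\<in>P. measure_pmf.prob (gnp n q) (F AB))"
    using finite_subset[OF P] by (simp add: measure_pmf.finite_measure_subadditive_finite)
  also have "\<dots> = (\<Sum>AB\<in>P. (1 - q) ^ (k * k))"
    by (intro sum.cong) (auto simp: P_def F_def prob_gnp_no_edges_between assms)
  also have "\<dots> \<le> 4 ^ n * (1 - q) ^ (k * k)"
    using card_P assms by (simp add: mult_right_mono)
  finally show ?thesis .
qed

lemma pow_mult_one_minus_pow_le_exp:
  fixes c q :: real
  assumes "0 < c" "q \<le> 1" "real n * (ln c + 1) \<le> q * real m"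
  shows "c ^ n * (1 - q) ^ m \<le> exp (- real n)"
proof -
  have "(1 - q) ^ m \<le> exp (- q) ^ m"
    using assms(2) exp_ge_add_one_self[of "- q"] by (intro power_mono) auto
  also have "\<dots> = exp (- q * real m)"
    by (simp add: exp_of_nat_mult[symmetric] mult.commute)
  finally have "c ^ n * (1 - q) ^ m \<le> exp (real n * ln c) * exp (- q * real m)"
    using assms(1) by (simp add: exp_of_nat_mult mult_left_mono)
  also have "\<dots> \<le> exp (- real n)"
    using assms(3) by (simp add: exp_add[symmetric] algebra_simps)
  finally show ?thesis .
qed

lemma prob_gnp_not_joins_k_sets_le_exp:
  assumes "\<delta> > 0" "0 \<le> q" "q \<le> 1"
    and "4 * (ln 4 + 1) \<le> \<delta>\<^sup>2 * (q * real n)" "\<delta> * real n / 2 \<le> real k"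
  shows "measure_pmf.prob (gnp n q) {E. \<not> joins_k_sets n k E} \<le> exp (- real n)"
proof -
  have "4 * (ln 4 + 1) * real n \<le> \<delta>\<^sup>2 * (q * real n) * real n"
    using assms(4) by (intro mult_right_mono) auto
  then have "real n * (ln 4 + 1) \<le> q * (\<delta> * real n / 2)\<^sup>2"
    by (simp add: power2_eq_square algebra_simps)
  also have "\<dots> \<le> q * real (k * k)"
    using assms(1,2,5) by (simp add: mult_left_mono power_mono power2_eq_square[symmetric])
  finally have "4 ^ n * (1 - q) ^ (k * k) \<le> exp (- real n)"
    using assms(3) by (intro pow_mult_one_minus_pow_le_exp) auto
  then show ?thesis
    using prob_gnp_not_joins_k_sets_le[OF assms(2,3), of n k] by linarith
qed

lemma prob_gnp_has_large_XY_matchings_ge: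
  assumes "\<delta> > 0" "0 \<le> q" "q \<le> 1" "4 * (ln 4 + 1) \<le> \<delta>\<^sup>2 * (q * real n)"
  shows "1 - exp (- real n) \<le> measure_pmf.prob (gnp n q) {E. has_large_XY_matchings \<delta> n E}"
proof -
  define k where "k = nat \<lceil>\<delta> * real n / 2\<rceil>"
  have "\<delta> * real n / 2 \<le> real k"
    unfolding k_def by linarith
  then have "measure_pmf.prob (gnp n q) {E. \<not> joins_k_sets n k E} \<le> exp (- real n)"
    using prob_gnp_not_joins_k_sets_le_exp assms by blast
  moreover have "measure_pmf.prob (gnp n q) {E. joins_k_sets n k E}
      = 1 - measure_pmf.prob (gnp n q) {E. \<not> joins_k_sets n k E}"
    using measure_pmf.prob_compl[of "{E. \<not> joins_k_sets n k E}" "gnp n q"]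
    by (simp add: set_diff_eq)
  moreover have "{E. joins_k_sets n k E} \<subseteq> {E. has_large_XY_matchings \<delta> n E}"
    using has_large_XY_matchings_if_joins_k_sets assms(1) unfolding k_def by auto
  then have "measure_pmf.prob (gnp n q) {E. joins_k_sets n k E}
      \<le> measure_pmf.prob (gnp n q) {E. has_large_XY_matchings \<delta> n E}"
    by (intro measure_pmf.finite_measure_mono) auto
  ultimately show ?thesis
    by linarith
qed

theorem claim2p8:
  fixes \<delta> :: real and p :: "nat \<Rightarrow> real"
  assumes "\<delta> > 0"
    and "\<And>n. 0 \<le> p n \<and> p n \<le> 1"
    and "filterlim (\<lambda>n. p n / (1 / real n)) at_top sequentially"
  shows "(\<lambda>n. measure_pmf.prob (gnp n (p n))
            {E. \<forall>X Y. X \<subseteq> {1..n} \<and> Y \<subseteq> {1..n} \<and> X \<inter> Y = {} \<and>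
                   real (card X) \<ge> \<delta> * real n \<and> real (card Y) \<ge> \<delta> * real n \<longrightarrow>
                   (\<exists>M. XY_matching E X Y M \<and> real (card M) \<ge> \<delta> * real n / 2)})
         \<longlonglongrightarrow> 1"
  unfolding has_large_XY_matchings_def[symmetric]
proof (rule tendsto_sandwich)
  have "(\<lambda>n. exp (- real n)) \<longlonglongrightarrow> 0"
    using filterlim_compose[OF exp_at_bot] filterlim_uminus_at_top filterlim_real_sequentially by blast
  then show "(\<lambda>n. 1 - exp (- real n)) \<longlonglongrightarrow> 1"
    using tendsto_diff[OF tendsto_const, of _ 0 sequentially 1] by simp
  show "(\<lambda>n. 1) \<longlonglongrightarrow> (1 :: real)"
    by simp
  show "\<forall>\<^sub>F n in sequentially. measure_pmf.prob (gnp n (p n)) {E. has_large_XY_matchings \<delta> n E} \<le> 1"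
    by (simp add: measure_pmf.prob_le_1)
  have "\<forall>\<^sub>F n in sequentially. 4 * (ln 4 + 1) / \<delta>\<^sup>2 \<le> p n / (1 / real n)"
    using assms(3) unfolding filterlim_at_top by blast
  then show "\<forall>\<^sub>F n in sequentially.
      1 - exp (- real n) \<le> measure_pmf.prob (gnp n (p n)) {E. has_large_XY_matchings \<delta> n E}"
  proof eventually_elim
    case (elim n)
    then have "4 * (ln 4 + 1) \<le> \<delta>\<^sup>2 * (p n * real n)"
      using assms(1) by (simp add: field_simps)
    then show ?case
      using prob_gnp_has_large_XY_matchings_ge assms(1,2) by blast
  qed
qed

end
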